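(* Consider a discrete-time model $t=0,1,2,\ldots$ of a company's Short Term Net Financial Position (STNFP) $D_{S,t}$, along a fixed realization, evolving by $$D_{S,t}=D_{S,t-1}-C_t,\qquad C_t=F_t-S_t,\qquad S_t=c_t+I_{L,t}+I_{S,t},\qquad t\ge 1,$$ where $F_t$ is the free cash flow at time $t$, $c_t+I_{L,t}$ is the term-debt service at time $t$, and $I_{S,t}=\mathbf r\, D_{S,t-1}$ is the interest paid at time $t$ on the STNFP outstanding at the beginning of the period, with a constant interest rate $\mathbf r\in(0,1)$. Assume there is a time $t_{SS}$ such that $F_t=F$ is constant for all $t\ge t_{SS}$, and assume $K:=c_t+I_{L,t}$ is the same constant for all $t$. If at some time $\bar t\ge t_{SS}$ the STNFP is decreasing, i.e. $D_{S,\bar t}< D_{S,\bar t-1}$, then $D_{S,t}< D_{S,t-1}$ for all $t\ge\bar t$.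
   Context: $D_{S,t}$ denotes the short-term net financial position (short-term debt) at time $t$; $C_t$ is its change (cash surplus) at time $t$. All quantities are real numbers along a given realization of the random cash flows. *)

theory Defs
  imports Complex_Main
begin

end

theory Submission
  imports Defs
begin

text \<open>Beyond the steady-state time the STNFP obeys the affine recurrence
  \<open>D t = (1 + r) D (t - 1) + (K - F)\<close>, so its increments satisfy
  \<open>D (t + 1) - D t = (1 + r) (D t - D (t - 1))\<close>; as \<open>1 + r > 0\<close>, a negative
  increment stays negative forever. Only \<open>r > -1\<close> matters.\<close>

lemma affine_recurrence_diff:
  fixes x :: "nat \<Rightarrow> 'a :: comm_ring"
  assumes "x (Suc n) = a * x n + b" and "x (Suc (Suc n)) = a * x (Suc n) + b"
  shows "x (Suc (Suc n)) - x (Suc n) = a * (x (Suc n) - x n)"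
  using assms by (simp add: algebra_simps)

lemma affine_recurrence_decreasing_from:
  fixes x :: "nat \<Rightarrow> 'a :: linordered_idom"
  assumes rec: "\<And>n. m \<le> n \<Longrightarrow> x (Suc n) = a * x n + b"
    and a_pos: "0 < a" and decr: "x (Suc m) < x m" and "m \<le> n"
  shows "x (Suc n) < x n"
  using \<open>m \<le> n\<close>
proof (induction n rule: dec_induct)
  case base
  show ?case using decr .
next
  case (step n)
  have "x (Suc (Suc n)) - x (Suc n) = a * (x (Suc n) - x n)"
    using rec step.hyps by (intro affine_recurrence_diff) auto
  also have "\<dots> < 0"
    using a_pos step.IH by (simp add: mult_pos_neg)
  finally show ?case by simp
qed

theorem corollaryA1:
  fixes D C F S c I_L I_S :: "nat \<Rightarrow> real"
    and r F_ss K :: real and t_SS t_bar :: nat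
  assumes r_pos: "0 < r" and r_lt1: "r < 1"
    and D_rec: "\<And>t. t \<ge> 1 \<Longrightarrow> D t = D (t - 1) - C t"
    and C_def: "\<And>t. t \<ge> 1 \<Longrightarrow> C t = F t - S t"
    and S_def: "\<And>t. t \<ge> 1 \<Longrightarrow> S t = c t + I_L t + I_S t"
    and IS_def: "\<And>t. t \<ge> 1 \<Longrightarrow> I_S t = r * D (t - 1)"
    and F_const: "\<And>t. t \<ge> t_SS \<Longrightarrow> F t = F_ss"
    and K_const: "\<And>t. c t + I_L t = K"
    and tbar_ge: "t_bar \<ge> t_SS" and tbar_pos: "t_bar \<ge> 1"
    and decr: "D t_bar < D (t_bar - 1)"
  shows "\<forall>t \<ge> t_bar. D t < D (t - 1)"
proof (intro allI impI)
  fix t assume "t_bar \<le> t"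
  have affine: "D (Suc n) = (1 + r) * D n + (K - F_ss)" if "t_bar - 1 \<le> n" for n
  proof -
    have "t_SS \<le> Suc n" using that tbar_ge tbar_pos by simp
    then show ?thesis
      using D_rec[of "Suc n"] C_def[of "Suc n"] S_def[of "Suc n"] IS_def[of "Suc n"]
        F_const[of "Suc n"] K_const[of "Suc n"]
      by (simp add: algebra_simps)
  qed
  have "D (Suc (t - 1)) < D (t - 1)"
  proof (rule affine_recurrence_decreasing_from[where m = "t_bar - 1"])
    show "D (Suc n) = (1 + r) * D n + (K - F_ss)" if "t_bar - 1 \<le> n" for n
      using that by (rule affine)
    show "D (Suc (t_bar - 1)) < D (t_bar - 1)" using decr tbar_pos by simp
  qed (use \<open>t_bar \<le> t\<close> r_pos in auto)
  then show "D t < D (t - 1)"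
    using \<open>t_bar \<le> t\<close> tbar_pos by simp
qed

end
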